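(* Let $a\ge 1$ and let $v_1,\dots,v_n$ be $a$-submodular valuations on a finite set of items $X=\{1,\dots,m\}$. Consider the greedy algorithm: start with $S_1=\dots=S_n=\emptyset$; for $x=1,\dots,m$ in turn, let $j$ be a bidder maximizing $v_j(S_j\cup\{x\})-v_j(S_j)$ and set $S_j\leftarrow S_j\cup\{x\}$. Then the resulting allocation satisfies $\sum_i v_i(S_i)\ge\frac{1}{1+a}\max\sum_i v_i(T_i)$, the maximum over all partitions $(T_1,\dots,T_n)$ of $X$; i.e., the greedy algorithm is a $(1+a)$-approximation.
   Context: A valuation on a finite set $X$ is a function $v:2^X\to\mathbb{R}_{\ge 0}$ with $v(\emptyset)=0$ and monotone under inclusion. For $W\subseteq X$, the marginal valuation is $v(A\mid W)=v(A\cup W)-v(W)$ for $A\subseteq X\setminus W$. A valuation $w$ exhibits $a$-bounded complementarities if $w(A\cup\{x\})\le w(A)+a\,w(\{x\})$ for every set $A$ and item $x$. A valuation $v$ is $a$-submodular if for every $W\subseteq X$ the marginal valuation $v(\cdot\mid W)$ exhibits $a$-bounded complementarities. *)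

theory Defs
  imports Complex_Main
begin

definition valuation :: "'a set \<Rightarrow> ('a set \<Rightarrow> real) \<Rightarrow> bool" where
  "valuation X v \<longleftrightarrow> v {} = 0 \<and> (\<forall>A. A \<subseteq> X \<longrightarrow> 0 \<le> v A)
     \<and> (\<forall>A B. A \<subseteq> B \<longrightarrow> B \<subseteq> X \<longrightarrow> v A \<le> v B)"

definition marginal :: "('a set \<Rightarrow> real) \<Rightarrow> 'a set \<Rightarrow> 'a set \<Rightarrow> real" where
  "marginal v W A = v (A \<union> W) - v W"

definition bounded_compl :: "real \<Rightarrow> 'a set \<Rightarrow> ('a set \<Rightarrow> real) \<Rightarrow> bool" where
  "bounded_compl a Y w \<longleftrightarrow> (\<forall>A x. A \<subseteq> Y \<longrightarrow> x \<in> Y \<longrightarrow> w (A \<union> {x}) \<le> w A + a * w {x})"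

definition a_submodular :: "real \<Rightarrow> 'a set \<Rightarrow> ('a set \<Rightarrow> real) \<Rightarrow> bool" where
  "a_submodular a X v \<longleftrightarrow> (\<forall>W. W \<subseteq> X \<longrightarrow> bounded_compl a (X - W) (marginal v W))"

text \<open>Possible states of the greedy algorithm with bidders 1..n after processing
  items 1..k (any tie-breaking among maximizing bidders).\<close>
inductive greedy_alloc :: "(nat \<Rightarrow> nat set \<Rightarrow> real) \<Rightarrow> nat \<Rightarrow> nat \<Rightarrow> (nat \<Rightarrow> nat set) \<Rightarrow> bool"
  for v :: "nat \<Rightarrow> nat set \<Rightarrow> real" and n :: nat where
  init: "greedy_alloc v n 0 (\<lambda>_. {})"
| step: "greedy_alloc v n k S \<Longrightarrow> j \<in> {1..n} \<Longrightarrow>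
     (\<forall>i\<in>{1..n}. v i (S i \<union> {Suc k}) - v i (S i) \<le> v j (S j \<union> {Suc k}) - v j (S j)) \<Longrightarrow>
     greedy_alloc v n (Suc k) (S(j := S j \<union> {Suc k}))"

end

theory Submission
  imports Defs
begin

text \<open>Charging argument. When the greedy algorithm processes item x, the bidder l who
  gets x in the partition T values x, on top of any superset of l's current greedy bundle,
  at most a times its marginal value for l's current bundle (a-submodularity); by the greedy
  choice the latter is at most the welfare gained in that step. Summing over the items gives
  \<open>\<Sum>i. v\<^sub>i(S\<^sub>i \<union> T\<^sub>i) - v\<^sub>i(S\<^sub>i) \<le> a \<Sum>i. v\<^sub>i(S\<^sub>i)\<close>, and monotonicity turns this into
  \<open>\<Sum>i. v\<^sub>i(T\<^sub>i) \<le> (1 + a) \<Sum>i. v\<^sub>i(S\<^sub>i)\<close>.\<close>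

lemma valuation_mono: "valuation X v \<Longrightarrow> A \<subseteq> B \<Longrightarrow> B \<subseteq> X \<Longrightarrow> v A \<le> v B"
  unfolding valuation_def by blast

lemma a_submodular_gain_le:
  assumes "a_submodular a X v" "W \<subseteq> B" "B \<subseteq> X" "x \<in> X" "x \<notin> W"
  shows "v (B \<union> {x}) - v B \<le> a * (v (W \<union> {x}) - v W)"
proof -
  have "bounded_compl a (X - W) (marginal v W)"
    using assms(1,2,3) unfolding a_submodular_def by blast
  moreover have "B - W \<subseteq> X - W" "x \<in> X - W"
    using assms(3,4,5) by auto
  ultimately have "marginal v W ((B - W) \<union> {x}) \<le> marginal v W (B - W) + a * marginal v W {x}"
    unfolding bounded_compl_def by blast
  moreover have "(B - W) \<union> {x} \<union> W = B \<union> {x}" "(B - W) \<union> W = B"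
    using assms(2) by auto
  ultimately show ?thesis
    unfolding marginal_def by (simp add: Un_commute)
qed

lemma a_submodular_drop_item_le:
  assumes "a_submodular a X v" "0 \<le> a" "S \<subseteq> B" "B \<union> T \<subseteq> X" "x \<in> X" "x \<notin> S"
    and "v (S \<union> {x}) - v S \<le> g"
  shows "v (B \<union> T) - v (B \<union> (T - {x})) \<le> (if x \<in> T then a * g else 0)"
proof (cases "x \<in> T")
  case True
  then have "B \<union> T = (B \<union> (T - {x})) \<union> {x}"
    by auto
  moreover have "v ((B \<union> (T - {x})) \<union> {x}) - v (B \<union> (T - {x})) \<le> a * (v (S \<union> {x}) - v S)"
    using assms(1,3-6) by (intro a_submodular_gain_le) auto
  moreover have "a * (v (S \<union> {x}) - v S) \<le> a * g"
    using assms(2,7) by (rule mult_left_mono[rotated])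
  ultimately show ?thesis
    using True by simp
qed simp

lemma sum_if_mem_disjoint_le:
  fixes c :: real
  assumes "finite I" "0 \<le> c" "\<forall>i\<in>I. \<forall>j\<in>I. i \<noteq> j \<longrightarrow> T i \<inter> T j = {}"
  shows "(\<Sum>i\<in>I. if x \<in> T i then c else 0) \<le> c"
proof -
  have "i = j" if "i \<in> I" "j \<in> I" "x \<in> T i" "x \<in> T j" for i j
    using assms(3) that by blast
  then have "real (card {i\<in>I. x \<in> T i}) \<le> 1"
    using assms(1) by (simp add: card_le_Suc0_iff_eq)
  then show ?thesis
    using assms(1,2) by (simp add: sum.inter_filter[symmetric] mult_left_le_one_le)
qed

lemma sum_fun_upd_arg:
  fixes f :: "'a \<Rightarrow> 'b \<Rightarrow> real"
  assumes "finite I" "j \<in> I"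
  shows "(\<Sum>i\<in>I. f i ((S(j := A)) i)) = (\<Sum>i\<in>I. f i (S i)) + (f j A - f j (S j))"
proof -
  have "(\<Sum>i\<in>I. f i ((S(j := A)) i) - f i (S i)) = (\<Sum>i\<in>I. if i = j then f j A - f j (S j) else 0)"
    by (rule sum.cong) auto
  then show ?thesis
    using assms by (simp add: sum_subtractf)
qed

lemma greedy_alloc_subset: "greedy_alloc v n k S \<Longrightarrow> S i \<subseteq> {1..k}"
  by (induction rule: greedy_alloc.induct) auto

text \<open>The invariant is stated for every B above the current allocation and every T
  distributing only the items processed so far, so that the induction over the run can
  add the newest item to T while keeping B fixed.\<close>

lemma greedy_alloc_exchange_bound:
  assumes "greedy_alloc v n k S" "k \<le> m" "0 \<le> a"
    and "\<forall>i\<in>{1..n}. valuation {1..m} (v i) \<and> a_submodular a {1..m} (v i)"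
    and "\<forall>i\<in>{1..n}. S i \<subseteq> B i \<and> B i \<subseteq> {1..m} \<and> T i \<subseteq> {1..k}"
    and "\<forall>i\<in>{1..n}. \<forall>j\<in>{1..n}. i \<noteq> j \<longrightarrow> T i \<inter> T j = {}"
  shows "(\<Sum>i=1..n. v i (B i \<union> T i) - v i (B i)) \<le> a * (\<Sum>i=1..n. v i (S i))"
  using assms
proof (induction arbitrary: B T)
  case init
  then have "v i {} = 0" if "i \<in> {1..n}" for i
    using that unfolding valuation_def by blast
  with init.prems(4) show ?case by simp
next
  case (step k S j)
  define x where "x = Suc k"
  define g where "g = v j (S j \<union> {x}) - v j (S j)"
  have x: "x \<in> {1..m}" "x \<notin> S i" "S i \<union> {x} \<subseteq> {1..m}" for i
    using step.prems(1) greedy_alloc_subset[OF step.hyps(1), of i] unfolding x_def by auto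
  have S_le_B: "S i \<subseteq> B i" if "i \<in> {1..n}" for i
    using step.prems(4) that by (auto split: if_splits)
  have "(\<Sum>i=1..n. v i (B i \<union> (T i - {x})) - v i (B i)) \<le> a * (\<Sum>i=1..n. v i (S i))"
  proof (rule step.IH)
    show "\<forall>i\<in>{1..n}. S i \<subseteq> B i \<and> B i \<subseteq> {1..m} \<and> T i - {x} \<subseteq> {1..k}"
      using S_le_B step.prems(4) unfolding x_def by fastforce
    show "\<forall>i\<in>{1..n}. \<forall>j\<in>{1..n}. i \<noteq> j \<longrightarrow> (T i - {x}) \<inter> (T j - {x}) = {}"
      using step.prems(5) by blast
  qed (use step.prems in auto)
  moreover have "v i (B i \<union> T i) - v i (B i \<union> (T i - {x})) \<le> (if x \<in> T i then a * g else 0)"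
    if "i \<in> {1..n}" for i
  proof (rule a_submodular_drop_item_le)
    show "B i \<union> T i \<subseteq> {1..m}"
      using step.prems(1,4) that unfolding x_def by fastforce
    show "v i (S i \<union> {x}) - v i (S i) \<le> g"
      using step.hyps(3) that unfolding g_def x_def by blast
  qed (use step.prems(2,3) S_le_B x that in auto)
  then have "(\<Sum>i=1..n. v i (B i \<union> T i) - v i (B i \<union> (T i - {x})))
      \<le> (\<Sum>i=1..n. if x \<in> T i then a * g else 0)"
    by (rule sum_mono)
  moreover have "0 \<le> g"
    using valuation_mono[OF _ Un_upper1 x(3)] step.prems(3) step.hyps(2) unfolding g_def by auto
  then have "(\<Sum>i=1..n. if x \<in> T i then a * g else 0) \<le> a * g"
    using step.prems(2,5) by (intro sum_if_mem_disjoint_le) auto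
  moreover have "(\<Sum>i=1..n. v i ((S(j := S j \<union> {x})) i)) = (\<Sum>i=1..n. v i (S i)) + g"
    unfolding g_def using step.hyps(2) by (intro sum_fun_upd_arg) auto
  ultimately show ?case
    unfolding x_def[symmetric] by (simp add: sum_subtractf algebra_simps)
qed

theorem theorem13:
  fixes a :: real and n m :: nat and v :: "nat \<Rightarrow> nat set \<Rightarrow> real"
    and S T :: "nat \<Rightarrow> nat set"
  assumes "a \<ge> 1" and "n \<ge> 1"
    and "\<forall>i\<in>{1..n}. valuation {1..m} (v i) \<and> a_submodular a {1..m} (v i)"
    and "greedy_alloc v n m S"
    and "(\<Union>i\<in>{1..n}. T i) = {1..m}"
    and "\<forall>i\<in>{1..n}. \<forall>j\<in>{1..n}. i \<noteq> j \<longrightarrow> T i \<inter> T j = {}"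
  shows "(\<Sum>i=1..n. v i (S i)) \<ge> (1 / (1 + a)) * (\<Sum>i=1..n. v i (T i))"
proof -
  have S_sub: "S i \<subseteq> {1..m}" for i
    using greedy_alloc_subset[OF assms(4)] .
  have T_sub: "\<forall>i\<in>{1..n}. T i \<subseteq> {1..m}"
    using assms(5) by blast
  have "(\<Sum>i=1..n. v i (S i \<union> T i) - v i (S i)) \<le> a * (\<Sum>i=1..n. v i (S i))"
    using greedy_alloc_exchange_bound[OF assms(4) order_refl _ assms(3) _ assms(6)]
      assms(1) S_sub T_sub by auto
  moreover have "(\<Sum>i=1..n. v i (T i)) \<le> (\<Sum>i=1..n. v i (S i \<union> T i))"
    using assms(3) S_sub T_sub by (intro sum_mono valuation_mono[of "{1..m}"]) auto
  ultimately have "(\<Sum>i=1..n. v i (T i)) \<le> (1 + a) * (\<Sum>i=1..n. v i (S i))"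
    by (simp add: sum_subtractf algebra_simps)
  then show ?thesis
    using assms(1) by (simp add: field_simps)
qed

end
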